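(* Let $S$ be a finite set of states and $I=\{1,\ldots,n\}$. The following two belief aggregation rules $f:\Delta(S)^I\to\Delta(S)$ are anonymous, single-valued, and satisfy Recursive Invariance: (1) for $|I|$ odd, the geometric median $f(\mathbf{p})=\arg\min_{p\in\Delta(S)}\sum_{i\in I}\|p_i-p\|$ (Euclidean norm); (2) the equal-wealth parimutuel price rule, where $f(\mathbf{p})$ is the equilibrium price $\rho$ of the parimutuel equilibrium with equal wealth of the market $(\mathbb{R}^S_+,p_i)_{i\in I}$.
   Context: $\Delta(S)$ is the set of probability distributions on $S$. Recursive Invariance: for all $\mathbf{p}\in\Delta(S)^I$ and $(\lambda_i)_{i\in I}\in[0,1]^I$, $f\big(((1-\lambda_i)p_i+\lambda_i f(\mathbf{p}))_{i\in I}\big)=f(\mathbf{p})$. The parimutuel market $(\mathbb{R}^S_+,p_i)_{i\in I}$ has consumers $i$ with consumption set $\mathbb{R}^S_+$ and linear utility $x\mapsto p_i\cdot x$. A parimutuel equilibrium with equal wealth is a pair $(\rho,\mathbf{x})$ with $\rho\in\Delta(S)$, $\mathbf{x}=(x_1,\ldots,x_n)\in(\mathbb{R}^S_+)^I$, such that (1) for each $i$, $\rho\cdot x_i\le 1/n$ and $p_i\cdot x_i\ge p_i\cdot y$ for all $y\in\mathbb{R}^S_+$ with $\rho\cdot y\le 1/n$; and (2) $\sum_i x_i=(1,\ldots,1)$. *)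

theory Defs
  imports "HOL-Analysis.Analysis"
begin

text \<open>Agents: I = {0..<n} (a relabelling of {1..n}). A profile is P :: nat => real^'s,
  only the values P i for i < n matter.\<close>

definition belief_simplex :: "(real^'s::finite) set" where
  "belief_simplex = {p. (\<forall>s. 0 \<le> p $ s) \<and> (\<Sum>s\<in>UNIV. p $ s) = 1}"

definition profile :: "nat \<Rightarrow> (nat \<Rightarrow> real^'s::finite) \<Rightarrow> bool" where
  "profile n P \<longleftrightarrow> (\<forall>i<n. P i \<in> belief_simplex)"

definition anonymous :: "nat \<Rightarrow> ((nat \<Rightarrow> real^'s::finite) \<Rightarrow> real^'s) \<Rightarrow> bool" where
  "anonymous n f \<longleftrightarrow>
     (\<forall>P \<sigma>. profile n P \<and> \<sigma> permutes {..<n} \<longrightarrow> f (P \<circ> \<sigma>) = f P)"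

definition recursive_invariance :: "nat \<Rightarrow> ((nat \<Rightarrow> real^'s::finite) \<Rightarrow> real^'s) \<Rightarrow> bool" where
  "recursive_invariance n f \<longleftrightarrow>
     (\<forall>P lam. profile n P \<and> (\<forall>i<n. 0 \<le> lam i \<and> lam i \<le> 1) \<longrightarrow>
        f (\<lambda>i. (1 - lam i) *\<^sub>R P i + lam i *\<^sub>R f P) = f P)"

definition geo_median_set :: "nat \<Rightarrow> (nat \<Rightarrow> real^'s::finite) \<Rightarrow> (real^'s) set" where
  "geo_median_set n P = {q \<in> belief_simplex. \<forall>r\<in>belief_simplex.
      (\<Sum>i<n. norm (P i - q)) \<le> (\<Sum>i<n. norm (P i - r))}"

definition geo_median :: "nat \<Rightarrow> (nat \<Rightarrow> real^'s::finite) \<Rightarrow> real^'s" where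
  "geo_median n P = (THE q. q \<in> geo_median_set n P)"

definition pm_equilibrium :: "nat \<Rightarrow> (nat \<Rightarrow> real^'s::finite) \<Rightarrow> real^'s \<Rightarrow> (nat \<Rightarrow> real^'s) \<Rightarrow> bool" where
  "pm_equilibrium n P \<rho> x \<longleftrightarrow>
     \<rho> \<in> belief_simplex \<and>
     (\<forall>i<n. (\<forall>s. 0 \<le> x i $ s) \<and> \<rho> \<bullet> x i \<le> 1 / real n \<and>
        (\<forall>y. (\<forall>s. 0 \<le> y $ s) \<and> \<rho> \<bullet> y \<le> 1 / real n \<longrightarrow> P i \<bullet> y \<le> P i \<bullet> x i)) \<and>
     (\<Sum>i<n. x i) = (\<chi> s. 1)"

definition pm_price :: "nat \<Rightarrow> (nat \<Rightarrow> real^'s::finite) \<Rightarrow> real^'s" where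
  "pm_price n P = (THE \<rho>. \<exists>x. pm_equilibrium n P \<rho> x)"

end

theory Submission
  imports Defs
begin

text \<open>
  Geometric median: the objective is continuous on the compact simplex, so minimisers exist.
  If q1 \<noteq> q2 were both minimisers, so would be their midpoint, which forces equality in every
  triangle inequality; then each norm (P i - q1) - norm (P i - q2) equals \<plusminus>norm (q1 - q2), and
  an odd number of signs \<plusminus>1 cannot sum to zero. Moving P i towards the median q shortens its
  distance to q at least as much as its distance to any other point, so q stays the median.

  Parimutuel prices: equilibria are characterised by the first-order conditions
  P i s \<le> n (P i \<bullet> x i) \<rho> s, with equality where agent i buys s. A maximiser of the
  Eisenberg-Gale product \<Prod>i. P i \<bullet> x i over all allocations satisfies them for suitable prices,
  which gives existence. If \<rho>' exceeded \<rho> on a nonempty set S of states, every agent buying in S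
  at the prices \<rho>' would spend the whole budget on S at the prices \<rho>, so \<rho>'(S) \<le> \<rho>(S); this
  gives uniqueness. Moving beliefs towards the equilibrium prices keeps the bundles optimal
  because budgets bind, which gives Recursive Invariance.
\<close>

lemma convex_belief_simplex: "convex (belief_simplex :: (real^'s::finite) set)"
proof (rule convexI)
  fix p q :: "real^'s" and u v :: real
  assume "p \<in> belief_simplex" "q \<in> belief_simplex" "0 \<le> u" "0 \<le> v" "u + v = 1"
  then show "u *\<^sub>R p + v *\<^sub>R q \<in> belief_simplex"
    by (simp add: belief_simplex_def sum.distrib flip: sum_distrib_left)
qed

lemma compact_belief_simplex: "compact (belief_simplex :: (real^'s::finite) set)"
proof -
  have "closed (belief_simplex :: (real^'s) set)"
    unfolding belief_simplex_def
    by (intro closed_Collect_conj closed_Collect_all closed_Collect_le closed_Collect_eq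
        continuous_intros)
  moreover have "belief_simplex \<subseteq> cbox (0::real^'s) (\<chi> s. 1)"
  proof
    fix p :: "real^'s" assume p: "p \<in> belief_simplex"
    have "p $ s \<le> (\<Sum>s\<in>UNIV. p $ s)" for s
      by (rule member_le_sum) (use p in \<open>auto simp: belief_simplex_def\<close>)
    then show "p \<in> cbox 0 (\<chi> s. 1)"
      using p by (auto simp: mem_box_cart belief_simplex_def)
  qed
  ultimately show ?thesis
    by (meson bounded_cbox bounded_subset compact_eq_bounded_closed)
qed

lemma uniform_belief_in_simplex: "(\<chi> s. 1 / real CARD('s)) \<in> (belief_simplex :: (real^'s::finite) set)"
  by (simp add: belief_simplex_def)

lemma norm_diff_aligned:
  fixes x y :: "'a::real_normed_vector"
  assumes "norm x *\<^sub>R y = norm y *\<^sub>R x"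
  shows "norm (x - y) = \<bar>norm x - norm y\<bar>"
proof (cases "x = 0")
  case False
  then have "y = (1 / norm x) *\<^sub>R (norm x *\<^sub>R y)"
    by simp
  also have "\<dots> = (norm y / norm x) *\<^sub>R x"
    using assms by simp
  finally have "x - y = (1 - norm y / norm x) *\<^sub>R x"
    by (simp add: scaleR_diff_left)
  then have "norm (x - y) = \<bar>(1 - norm y / norm x) * norm x\<bar>"
    by (simp add: abs_mult)
  also have "(1 - norm y / norm x) * norm x = norm x - norm y"
    using False by (simp add: field_simps)
  finally show ?thesis .
qed simp

lemma sum_signs_nonzero_if_odd_card:
  fixes sg :: "'i \<Rightarrow> real"
  assumes "finite A" "odd (card A)" "\<forall>i\<in>A. sg i = 1 \<or> sg i = -1"
  shows "(\<Sum>i\<in>A. sg i) \<noteq> 0"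
proof
  assume sum0: "(\<Sum>i\<in>A. sg i) = 0"
  have "(\<Sum>i\<in>A. sg i) = (\<Sum>i\<in>A. 1 - 2 * of_bool (sg i = -1))"
    by (rule sum.cong) (use assms(3) in auto)
  also have "\<dots> = real (card A) - 2 * real (card (A \<inter> {i. sg i = -1}))"
    using assms(1) by (simp add: sum_subtractf sum_distrib_left[symmetric])
  finally have "card A = 2 * card (A \<inter> {i. sg i = -1})"
    using sum0 by linarith
  with assms(2) show False
    by simp
qed

lemma sum_norm_minimisers_equidistant:
  fixes p :: "'i \<Rightarrow> 'a::real_inner"
  assumes "finite A" "convex C" "q1 \<in> C" "q2 \<in> C"
    and min1: "\<And>r. r \<in> C \<Longrightarrow> (\<Sum>i\<in>A. norm (p i - q1)) \<le> (\<Sum>i\<in>A. norm (p i - r))"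
    and min2: "\<And>r. r \<in> C \<Longrightarrow> (\<Sum>i\<in>A. norm (p i - q2)) \<le> (\<Sum>i\<in>A. norm (p i - r))"
    and "i \<in> A"
  shows "\<bar>norm (p i - q1) - norm (p i - q2)\<bar> = norm (q1 - q2)"
proof -
  define a where "a k = p k - q1" for k
  define b where "b k = p k - q2" for k
  define slack where "slack k = norm (a k) + norm (b k) - norm (a k + b k)" for k
  define c where "c = (1/2) *\<^sub>R q1 + (1/2) *\<^sub>R q2"
  have "c \<in> C"
    unfolding c_def using assms(2-4) by (rule convexD) auto
  have "(1/2) *\<^sub>R v + (1/2) *\<^sub>R v = v" for v :: 'a
    by (simp flip: scaleR_add_left)
  then have "p k - c = (1/2) *\<^sub>R (a k + b k)" for k
    by (simp add: a_def b_def c_def algebra_simps)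
  then have "(\<Sum>k\<in>A. slack k) =
      (\<Sum>k\<in>A. norm (p k - q1)) + (\<Sum>k\<in>A. norm (p k - q2)) - 2 * (\<Sum>k\<in>A. norm (p k - c))"
    by (simp add: slack_def a_def b_def sum.distrib sum_subtractf sum_distrib_left)
  also have "\<dots> \<le> 0"
    using min1[OF \<open>c \<in> C\<close>] min1[OF \<open>q2 \<in> C\<close>] min2[OF \<open>q1 \<in> C\<close>] by linarith
  finally have "(\<Sum>k\<in>A. slack k) \<le> 0" .
  moreover have "\<forall>k\<in>A. 0 \<le> slack k"
    by (simp add: slack_def norm_triangle_ineq)
  ultimately have "slack i = 0"
    using sum_nonneg_eq_0_iff[OF assms(1)] \<open>i \<in> A\<close> by (metis antisym sum_nonneg)
  then have "norm (a i + b i) = norm (a i) + norm (b i)"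
    by (simp add: slack_def)
  then have "norm (a i) *\<^sub>R b i = norm (b i) *\<^sub>R a i"
    using norm_triangle_eq by blast
  then have "norm (a i - b i) = \<bar>norm (a i) - norm (b i)\<bar>"
    by (intro norm_diff_aligned) simp
  then show ?thesis
    by (simp add: a_def b_def norm_minus_commute)
qed

lemma sum_norm_minimiser_unique:
  fixes p :: "'i \<Rightarrow> 'a::real_inner"
  assumes "finite A" "odd (card A)" "convex C" "q1 \<in> C" "q2 \<in> C"
    and min1: "\<And>r. r \<in> C \<Longrightarrow> (\<Sum>i\<in>A. norm (p i - q1)) \<le> (\<Sum>i\<in>A. norm (p i - r))"
    and min2: "\<And>r. r \<in> C \<Longrightarrow> (\<Sum>i\<in>A. norm (p i - q2)) \<le> (\<Sum>i\<in>A. norm (p i - r))"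
  shows "q1 = q2"
proof (rule ccontr)
  assume "q1 \<noteq> q2"
  then have d: "norm (q1 - q2) > 0"
    by simp
  define sg where "sg i = (norm (p i - q1) - norm (p i - q2)) / norm (q1 - q2)" for i
  have "\<forall>i\<in>A. sg i = 1 \<or> sg i = -1"
  proof
    fix i assume "i \<in> A"
    have "\<bar>norm (p i - q1) - norm (p i - q2)\<bar> = norm (q1 - q2)"
      using assms(1,3-5) min1 min2 \<open>i \<in> A\<close> by (rule sum_norm_minimisers_equidistant)
    with d show "sg i = 1 \<or> sg i = -1"
      unfolding sg_def by (auto simp: abs_if field_simps split: if_splits)
  qed
  moreover have "(\<Sum>i\<in>A. sg i) = 0"
    using min1[OF assms(5)] min2[OF assms(4)]
    by (simp add: sg_def sum_divide_distrib[symmetric] sum_subtractf)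
  ultimately show False
    using sum_signs_nonzero_if_odd_card[OF assms(1,2)] by blast
qed

lemma sum_norm_minimiser_shrink:
  fixes p :: "'i \<Rightarrow> 'a::real_normed_vector"
  assumes min: "\<And>r. r \<in> C \<Longrightarrow> (\<Sum>i\<in>A. norm (p i - q)) \<le> (\<Sum>i\<in>A. norm (p i - r))"
    and lam: "\<forall>i\<in>A. 0 \<le> lam i \<and> lam i \<le> 1" and "r \<in> C"
  defines "p' \<equiv> \<lambda>i. (1 - lam i) *\<^sub>R p i + lam i *\<^sub>R q"
  shows "(\<Sum>i\<in>A. norm (p' i - q)) \<le> (\<Sum>i\<in>A. norm (p' i - r))"
proof -
  have shift: "p i - p' i = lam i *\<^sub>R (p i - q)" "p' i - q = (1 - lam i) *\<^sub>R (p i - q)" for i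
    by (simp_all add: p'_def algebra_simps)
  have near: "norm (p' i - q) = norm (p i - q) - lam i * norm (p i - q)" if "i \<in> A" for i
    using lam that by (simp add: shift(2) abs_of_nonneg left_diff_distrib)
  have far: "norm (p i - r) \<le> lam i * norm (p i - q) + norm (p' i - r)" if "i \<in> A" for i
    using lam that norm_triangle_sub[of "p i - r" "p' i - r"] by (simp add: shift(1))
  have "(\<Sum>i\<in>A. norm (p' i - q)) = (\<Sum>i\<in>A. norm (p i - q)) - (\<Sum>i\<in>A. lam i * norm (p i - q))"
    by (simp add: near sum_subtractf)
  also have "\<dots> \<le> (\<Sum>i\<in>A. norm (p i - r)) - (\<Sum>i\<in>A. lam i * norm (p i - q))"
    using min[OF \<open>r \<in> C\<close>] by simp
  also have "\<dots> \<le> (\<Sum>i\<in>A. norm (p' i - r))"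
    using sum_mono[of A "\<lambda>i. norm (p i - r)", OF far] by (simp add: sum.distrib)
  finally show ?thesis .
qed

lemma geo_median_set_nonempty: "\<exists>q. q \<in> geo_median_set n (P :: nat \<Rightarrow> real^'s::finite)"
proof -
  have "continuous_on belief_simplex (\<lambda>r::real^'s. \<Sum>i<n. norm (P i - r))"
    by (intro continuous_intros)
  then show ?thesis
    using continuous_attains_inf[OF compact_belief_simplex] uniform_belief_in_simplex
    unfolding geo_median_set_def by blast
qed

lemma geo_median_set_unique:
  fixes P :: "nat \<Rightarrow> real^'s::finite"
  assumes "odd n" "q1 \<in> geo_median_set n P" "q2 \<in> geo_median_set n P"
  shows "q1 = q2"
  using assms
  by (intro sum_norm_minimiser_unique[of "{..<n}" belief_simplex q1 q2 P])
     (auto simp: geo_median_set_def convex_belief_simplex)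

lemma geo_median_eqI:
  fixes P :: "nat \<Rightarrow> real^'s::finite"
  assumes "odd n" "q \<in> geo_median_set n P"
  shows "geo_median n P = q"
  unfolding geo_median_def using assms geo_median_set_unique by blast

lemma geo_median_set_permute:
  fixes P :: "nat \<Rightarrow> real^'s::finite"
  assumes "\<sigma> permutes {..<n}"
  shows "geo_median_set n (P \<circ> \<sigma>) = geo_median_set n P"
proof -
  have "(\<Sum>i<n. norm ((P \<circ> \<sigma>) i - r)) = (\<Sum>i<n. norm (P i - r))" for r
    using sum.permute[OF assms, of "\<lambda>i. norm (P i - r)"] by (simp add: comp_def)
  then show ?thesis
    by (simp add: geo_median_set_def)
qed

lemma anonymous_geo_median: "anonymous n (geo_median n :: (nat \<Rightarrow> real^'s::finite) \<Rightarrow> real^'s)"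
  unfolding anonymous_def geo_median_def by (simp add: geo_median_set_permute)

lemma recursive_invariance_geo_median:
  assumes "odd n"
  shows "recursive_invariance n (geo_median n :: (nat \<Rightarrow> real^'s::finite) \<Rightarrow> real^'s)"
  unfolding recursive_invariance_def
proof (intro allI impI)
  fix P :: "nat \<Rightarrow> real^'s" and lam :: "nat \<Rightarrow> real"
  assume "profile n P \<and> (\<forall>i<n. 0 \<le> lam i \<and> lam i \<le> 1)"
  then have lam: "\<forall>i\<in>{..<n}. 0 \<le> lam i \<and> lam i \<le> 1"
    by simp
  obtain q where q: "q \<in> geo_median_set n P"
    using geo_median_set_nonempty by blast
  then have "q \<in> geo_median_set n (\<lambda>i. (1 - lam i) *\<^sub>R P i + lam i *\<^sub>R q)"
    unfolding geo_median_set_def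
    using sum_norm_minimiser_shrink[where A = "{..<n}" and C = belief_simplex, OF _ lam] by auto
  moreover have "geo_median n P = q"
    using geo_median_eqI[OF assms q] .
  ultimately show "geo_median n (\<lambda>i. (1 - lam i) *\<^sub>R P i + lam i *\<^sub>R geo_median n P) = geo_median n P"
    using geo_median_eqI[OF assms] by simp
qed

lemma inner_vec_real: "x \<bullet> y = (\<Sum>s\<in>UNIV. x $ s * y $ s)" for x y :: "real^'s::finite"
  by (simp add: inner_vec_def)

lemma profile_permute:
  assumes "profile n P" "\<sigma> permutes {..<n}"
  shows "profile n (P \<circ> \<sigma>)"
  using assms permutes_in_image[OF assms(2)] by (simp add: profile_def)

lemma profile_shrink:
  assumes "profile n P" "q \<in> belief_simplex" "\<forall>i<n. 0 \<le> lam i \<and> lam i \<le> 1"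
  shows "profile n (\<lambda>i. (1 - lam i) *\<^sub>R P i + lam i *\<^sub>R q)"
  using assms by (auto simp: profile_def intro!: convexD[OF convex_belief_simplex])

lemma pm_equilibrium_price_nonneg:
  assumes "pm_equilibrium n P \<rho> x"
  shows "0 \<le> \<rho> $ s"
  using assms by (simp add: pm_equilibrium_def belief_simplex_def)

lemma pm_equilibrium_demand_nonneg:
  assumes "pm_equilibrium n P \<rho> x" "i < n"
  shows "0 \<le> x i $ s"
  using assms by (simp add: pm_equilibrium_def)

lemma pm_equilibrium_market_clears:
  fixes P :: "nat \<Rightarrow> real^'s::finite"
  assumes "pm_equilibrium n P \<rho> x"
  shows "(\<Sum>i<n. x i $ s) = 1"
proof -
  have "(\<Sum>i<n. x i) $ s = ((\<chi> s. 1) :: real^'s) $ s"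
    using assms by (simp add: pm_equilibrium_def)
  then show ?thesis
    by simp
qed

lemma pm_equilibrium_budget_binding:
  fixes P :: "nat \<Rightarrow> real^'s::finite"
  assumes eq: "pm_equilibrium n P \<rho> x" and i: "i < n"
  shows "\<rho> \<bullet> x i = 1 / real n"
proof -
  have slack: "\<forall>k\<in>{..<n}. 0 \<le> 1 / real n - \<rho> \<bullet> x k"
    using eq by (auto simp: pm_equilibrium_def)
  have "(\<Sum>k<n. \<rho> \<bullet> x k) = \<rho> \<bullet> (\<chi> s. 1)"
    using eq by (simp add: pm_equilibrium_def flip: inner_sum_right)
  also have "\<dots> = 1"
    using eq by (simp add: inner_vec_real pm_equilibrium_def belief_simplex_def)
  finally have "(\<Sum>k<n. 1 / real n - \<rho> \<bullet> x k) = 0"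
    using i by (simp add: sum_subtractf)
  with slack have "\<forall>k\<in>{..<n}. 1 / real n - \<rho> \<bullet> x k = 0"
    by (subst (asm) sum_nonneg_eq_0_iff) auto
  with i show ?thesis
    by simp
qed

lemma pm_equilibrium_optimal:
  assumes "pm_equilibrium n P \<rho> x" "i < n" "\<forall>t. 0 \<le> y $ t" "\<rho> \<bullet> y \<le> 1 / real n"
  shows "P i \<bullet> y \<le> P i \<bullet> x i"
  using assms by (simp add: pm_equilibrium_def)

lemma pm_equilibrium_free_state_nonpos:
  fixes P :: "nat \<Rightarrow> real^'s::finite"
  assumes eq: "pm_equilibrium n P \<rho> x" and i: "i < n" and free: "\<rho> $ s = 0"
  shows "P i $ s \<le> 0"
proof (rule ccontr)
  assume "\<not> P i $ s \<le> 0"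
  \<comment> \<open>Otherwise buying enough of the free state s would beat the optimal bundle.\<close>
  define c where "c = (\<bar>P i \<bullet> x i\<bar> + 1) / P i $ s"
  have "\<forall>t. 0 \<le> axis s c $ t"
    using \<open>\<not> P i $ s \<le> 0\<close> by (simp add: c_def axis_def)
  moreover have "\<rho> \<bullet> axis s c \<le> 1 / real n"
    using free by (simp add: inner_axis)
  ultimately have "P i \<bullet> axis s c \<le> P i \<bullet> x i"
    by (rule pm_equilibrium_optimal[OF eq i])
  moreover have "P i \<bullet> axis s c = \<bar>P i \<bullet> x i\<bar> + 1"
    using \<open>\<not> P i $ s \<le> 0\<close> by (simp add: inner_axis c_def)
  ultimately show False
    by simp
qed

lemma pm_equilibrium_belief_le_price:
  fixes P :: "nat \<Rightarrow> real^'s::finite"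
  assumes eq: "pm_equilibrium n P \<rho> x" and i: "i < n"
  shows "P i $ s \<le> real n * (P i \<bullet> x i) * \<rho> $ s"
proof -
  have "0 \<le> \<rho> $ s"
    using pm_equilibrium_price_nonneg[OF eq] .
  then consider "\<rho> $ s = 0" | "0 < \<rho> $ s"
    by linarith
  then show ?thesis
  proof cases
    case 1
    then show ?thesis
      using pm_equilibrium_free_state_nonpos[OF eq i] by simp
  next
    case 2
    define c where "c = 1 / (real n * \<rho> $ s)"
    have "\<forall>t. 0 \<le> axis s c $ t"
      using 2 by (simp add: c_def axis_def)
    moreover have "\<rho> \<bullet> axis s c \<le> 1 / real n"
      using 2 by (simp add: c_def inner_axis)
    ultimately have "P i \<bullet> axis s c \<le> P i \<bullet> x i"
      by (rule pm_equilibrium_optimal[OF eq i])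
    then show ?thesis
      using 2 i by (simp add: inner_axis c_def field_simps)
  qed
qed

lemma pm_equilibrium_utility_ge:
  fixes P :: "nat \<Rightarrow> real^'s::finite"
  assumes "profile n P" and eq: "pm_equilibrium n P \<rho> x" and i: "i < n"
  shows "1 \<le> real n * (P i \<bullet> x i)"
proof -
  have "1 = (\<Sum>s\<in>UNIV. P i $ s)"
    using assms by (simp add: profile_def belief_simplex_def)
  also have "\<dots> \<le> (\<Sum>s\<in>UNIV. real n * (P i \<bullet> x i) * \<rho> $ s)"
    by (intro sum_mono pm_equilibrium_belief_le_price[OF eq i])
  also have "\<dots> = real n * (P i \<bullet> x i)"
    using eq by (simp add: pm_equilibrium_def belief_simplex_def flip: sum_distrib_left)
  finally show ?thesis .
qed

lemma pm_equilibrium_belief_eq_price: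
  fixes P :: "nat \<Rightarrow> real^'s::finite"
  assumes eq: "pm_equilibrium n P \<rho> x" and i: "i < n" and pos: "0 < x i $ s"
  shows "P i $ s = real n * (P i \<bullet> x i) * \<rho> $ s"
proof -
  define u where "u = P i \<bullet> x i"
  define gap where "gap t = x i $ t * (real n * u * \<rho> $ t - P i $ t)" for t
  have "\<forall>t\<in>UNIV. 0 \<le> gap t"
    using pm_equilibrium_belief_le_price[OF eq i] pm_equilibrium_demand_nonneg[OF eq i]
    by (simp add: gap_def u_def)
  moreover have "(\<Sum>t\<in>UNIV. gap t) =
      real n * u * (\<Sum>t\<in>UNIV. \<rho> $ t * x i $ t) - (\<Sum>t\<in>UNIV. P i $ t * x i $ t)"
    by (simp add: gap_def algebra_simps sum_subtractf sum_distrib_left)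
  then have "(\<Sum>t\<in>UNIV. gap t) = real n * u * (\<rho> \<bullet> x i) - u"
    by (simp only: u_def inner_vec_real)
  then have "(\<Sum>t\<in>UNIV. gap t) = 0"
    using pm_equilibrium_budget_binding[OF eq i] i by simp
  ultimately have "gap s = 0"
    by (simp add: sum_nonneg_eq_0_iff)
  with pos show ?thesis
    by (simp add: gap_def u_def)
qed

lemma pm_equilibriumI:
  fixes P :: "nat \<Rightarrow> real^'s::finite"
  assumes "\<rho> \<in> belief_simplex" and "(\<Sum>i<n. x i) = (\<chi> s. 1)"
    and nonneg: "\<And>i s. i < n \<Longrightarrow> 0 \<le> x i $ s"
    and pos: "\<And>i. i < n \<Longrightarrow> 0 < P i \<bullet> x i"
    and le: "\<And>i s. i < n \<Longrightarrow> P i $ s \<le> real n * (P i \<bullet> x i) * \<rho> $ s"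
    and eq: "\<And>i s. i < n \<Longrightarrow> 0 < x i $ s \<Longrightarrow> P i $ s = real n * (P i \<bullet> x i) * \<rho> $ s"
  shows "pm_equilibrium n P \<rho> x"
proof -
  have agent: "\<rho> \<bullet> x i \<le> 1 / real n \<and>
      (\<forall>y. (\<forall>s. 0 \<le> y $ s) \<and> \<rho> \<bullet> y \<le> 1 / real n \<longrightarrow> P i \<bullet> y \<le> P i \<bullet> x i)"
    if i: "i < n" for i
  proof (intro conjI allI impI)
    define c where "c = real n * (P i \<bullet> x i)"
    have "c > 0"
      using pos[OF i] i by (simp add: c_def)
    have "c * (\<rho> \<bullet> x i) = (\<Sum>s\<in>UNIV. (c * \<rho> $ s) * x i $ s)"
      by (simp add: inner_vec_real sum_distrib_left mult.assoc)
    also have "\<dots> = (\<Sum>s\<in>UNIV. P i $ s * x i $ s)"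
    proof (rule sum.cong)
      fix s
      show "c * \<rho> $ s * x i $ s = P i $ s * x i $ s"
        using nonneg[OF i, of s] eq[OF i, of s] by (cases "x i $ s = 0") (simp_all add: c_def)
    qed simp
    finally have "c * (\<rho> \<bullet> x i) = c / real n"
      using i by (simp add: c_def inner_vec_real)
    then show "\<rho> \<bullet> x i \<le> 1 / real n"
      using \<open>c > 0\<close> i by (simp add: field_simps)
    fix y :: "real^'s" assume y: "(\<forall>s. 0 \<le> y $ s) \<and> \<rho> \<bullet> y \<le> 1 / real n"
    have "P i \<bullet> y \<le> (\<Sum>s\<in>UNIV. (c * \<rho> $ s) * y $ s)"
      unfolding inner_vec_real[of "P i" y] c_def using le[OF i] y by (intro sum_mono mult_right_mono) auto
    also have "\<dots> = c * (\<rho> \<bullet> y)"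
      by (simp add: inner_vec_real sum_distrib_left mult.assoc)
    also have "\<dots> \<le> c / real n"
      using y \<open>c > 0\<close> mult_left_mono[of "\<rho> \<bullet> y" "1 / real n" c] by simp
    also have "\<dots> = P i \<bullet> x i"
      using i by (simp add: c_def)
    finally show "P i \<bullet> y \<le> P i \<bullet> x i" .
  qed
  then show ?thesis
    using assms(1,2) nonneg unfolding pm_equilibrium_def by blast
qed

lemma pm_equilibrium_spending_on_dearer_states:
  fixes P :: "nat \<Rightarrow> real^'s::finite"
  assumes prof: "profile n P" and eq: "pm_equilibrium n P \<rho> x" and eq': "pm_equilibrium n P \<rho>' x'"
    and i: "i < n" and s0: "0 < x' i $ s0" "\<rho> $ s0 < \<rho>' $ s0"
  shows "(\<Sum>s | \<rho> $ s < \<rho>' $ s. \<rho> $ s * x i $ s) = 1 / real n"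
proof -
  define u where "u = real n * (P i \<bullet> x i)"
  define u' where "u' = real n * (P i \<bullet> x' i)"
  have "1 \<le> u" "1 \<le> u'"
    unfolding u_def u'_def using pm_equilibrium_utility_ge[OF prof] eq eq' i by auto
  have "0 \<le> \<rho> $ s" for s
    using pm_equilibrium_price_nonneg[OF eq] .
  \<comment> \<open>Agent i buys the state s0 under the prices \<rho>', so its utility must be lower there.\<close>
  have "u' * \<rho>' $ s0 \<le> u * \<rho> $ s0"
    using pm_equilibrium_belief_eq_price[OF eq' i s0(1)] pm_equilibrium_belief_le_price[OF eq i, of s0]
    by (simp add: u_def u'_def)
  also have "\<dots> < u * \<rho>' $ s0"
    using s0(2) \<open>1 \<le> u\<close> by simp
  finally have "u' < u"
    using s0(2) \<open>0 \<le> \<rho> $ s0\<close> by (simp add: mult_less_cancel_right)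
  have outside: "\<rho> $ s * x i $ s = 0" if "\<not> \<rho> $ s < \<rho>' $ s" for s
  proof (cases "0 < x i $ s")
    case True
    have "u * \<rho> $ s \<le> u' * \<rho>' $ s"
      using pm_equilibrium_belief_eq_price[OF eq i True] pm_equilibrium_belief_le_price[OF eq' i, of s]
      by (simp add: u_def u'_def)
    also have "\<dots> \<le> u' * \<rho> $ s"
      using that \<open>1 \<le> u'\<close> by simp
    finally have "\<rho> $ s = 0"
      using \<open>u' < u\<close> \<open>0 \<le> \<rho> $ s\<close> by (simp add: mult_le_cancel_right)
    then show ?thesis
      by simp
  next
    case False
    then show ?thesis
      using pm_equilibrium_demand_nonneg[OF eq i, of s] by simp
  qed
  have "(\<Sum>s | \<rho> $ s < \<rho>' $ s. \<rho> $ s * x i $ s) = (\<Sum>s\<in>UNIV. \<rho> $ s * x i $ s)"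
    by (rule sum.mono_neutral_left) (use outside in auto)
  also have "\<dots> = 1 / real n"
    using pm_equilibrium_budget_binding[OF eq i] by (simp add: inner_vec_real)
  finally show ?thesis .
qed

lemma pm_equilibrium_spending_on_dearer_states_le:
  fixes P :: "nat \<Rightarrow> real^'s::finite"
  assumes prof: "profile n P" and eq: "pm_equilibrium n P \<rho> x" and eq': "pm_equilibrium n P \<rho>' x'"
    and i: "i < n"
  shows "(\<Sum>s | \<rho> $ s < \<rho>' $ s. \<rho>' $ s * x' i $ s) \<le> (\<Sum>s | \<rho> $ s < \<rho>' $ s. \<rho> $ s * x i $ s)"
proof (cases "\<exists>s0. 0 < x' i $ s0 \<and> \<rho> $ s0 < \<rho>' $ s0")
  case True
  then obtain s0 where "0 < x' i $ s0" "\<rho> $ s0 < \<rho>' $ s0"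
    by blast
  have "(\<Sum>s | \<rho> $ s < \<rho>' $ s. \<rho>' $ s * x' i $ s) \<le> (\<Sum>s\<in>UNIV. \<rho>' $ s * x' i $ s)"
    using pm_equilibrium_price_nonneg[OF eq'] pm_equilibrium_demand_nonneg[OF eq' i]
    by (intro sum_mono2) auto
  also have "\<dots> = 1 / real n"
    using pm_equilibrium_budget_binding[OF eq' i] by (simp add: inner_vec_real)
  also have "\<dots> = (\<Sum>s | \<rho> $ s < \<rho>' $ s. \<rho> $ s * x i $ s)"
    using pm_equilibrium_spending_on_dearer_states[OF prof eq eq' i \<open>0 < x' i $ s0\<close> \<open>\<rho> $ s0 < \<rho>' $ s0\<close>]
    by simp
  finally show ?thesis .
next
  case False
  then have "x' i $ s = 0" if "\<rho> $ s < \<rho>' $ s" for s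
    using that pm_equilibrium_demand_nonneg[OF eq' i, of s] by (metis antisym not_less)
  moreover have "0 \<le> (\<Sum>s | \<rho> $ s < \<rho>' $ s. \<rho> $ s * x i $ s)"
    using pm_equilibrium_price_nonneg[OF eq] pm_equilibrium_demand_nonneg[OF eq i]
    by (intro sum_nonneg) auto
  ultimately show ?thesis
    by simp
qed

lemma sum_eq_total_spending:
  fixes y :: "nat \<Rightarrow> real^'s::finite"
  assumes "\<And>s. (\<Sum>i<n. y i $ s) = 1"
  shows "(\<Sum>s\<in>S. \<pi> $ s) = (\<Sum>i<n. \<Sum>s\<in>S. \<pi> $ s * y i $ s)"
proof -
  have "(\<Sum>s\<in>S. \<pi> $ s) = (\<Sum>s\<in>S. \<Sum>i<n. \<pi> $ s * y i $ s)"
    using assms by (simp flip: sum_distrib_left)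
  also have "\<dots> = (\<Sum>i<n. \<Sum>s\<in>S. \<pi> $ s * y i $ s)"
    by (rule sum.swap)
  finally show ?thesis .
qed

lemma pm_equilibrium_price_le:
  fixes P :: "nat \<Rightarrow> real^'s::finite"
  assumes prof: "profile n P" and eq: "pm_equilibrium n P \<rho> x" and eq': "pm_equilibrium n P \<rho>' x'"
  shows "\<rho>' $ t \<le> \<rho> $ t"
proof (rule ccontr)
  define S where "S = {s. \<rho> $ s < \<rho>' $ s}"
  assume "\<not> \<rho>' $ t \<le> \<rho> $ t"
  then have "t \<in> S"
    by (simp add: S_def)
  have "(\<Sum>s\<in>S. \<rho>' $ s) = (\<Sum>i<n. \<Sum>s\<in>S. \<rho>' $ s * x' i $ s)"
    using pm_equilibrium_market_clears[OF eq'] by (rule sum_eq_total_spending)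
  also have "\<dots> \<le> (\<Sum>i<n. \<Sum>s\<in>S. \<rho> $ s * x i $ s)"
    unfolding S_def using pm_equilibrium_spending_on_dearer_states_le[OF prof eq eq']
    by (rule sum_mono) simp
  also have "\<dots> = (\<Sum>s\<in>S. \<rho> $ s)"
    using pm_equilibrium_market_clears[OF eq] by (rule sum_eq_total_spending[symmetric])
  also have "\<dots> < (\<Sum>s\<in>S. \<rho>' $ s)"
    using \<open>t \<in> S\<close> by (intro sum_strict_mono) (auto simp: S_def)
  finally show False
    by simp
qed

lemma pm_equilibrium_price_unique:
  fixes P :: "nat \<Rightarrow> real^'s::finite"
  assumes "profile n P" "pm_equilibrium n P \<rho> x" "pm_equilibrium n P \<rho>' x'"
  shows "\<rho> = \<rho>'"
  using pm_equilibrium_price_le[OF assms] pm_equilibrium_price_le[OF assms(1,3,2)]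
  by (simp add: vec_eq_iff order_antisym)

lemma pm_price_eqI:
  fixes P :: "nat \<Rightarrow> real^'s::finite"
  assumes "profile n P" "pm_equilibrium n P \<rho> x"
  shows "pm_price n P = \<rho>"
  unfolding pm_price_def using assms pm_equilibrium_price_unique by blast

definition allocations :: "nat \<Rightarrow> (nat \<Rightarrow> real^'s::finite) set" where
  "allocations n = {x. (\<forall>i<n. \<forall>s. 0 \<le> x i $ s) \<and> (\<forall>i\<ge>n. x i = 0) \<and> (\<Sum>i<n. x i) = (\<chi> s. 1)}"

definition nash_product :: "nat \<Rightarrow> (nat \<Rightarrow> real^'s::finite) \<Rightarrow> (nat \<Rightarrow> real^'s) \<Rightarrow> real" where
  "nash_product n P x = (\<Prod>i<n. P i \<bullet> x i)"

lemma allocations_sum_component: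
  fixes x :: "nat \<Rightarrow> real^'s::finite"
  assumes "x \<in> allocations n"
  shows "(\<Sum>i<n. x i $ s) = 1"
proof -
  have "(\<Sum>i<n. x i) $ s = ((\<chi> s. 1) :: real^'s) $ s"
    using assms by (simp add: allocations_def)
  then show ?thesis
    by simp
qed

lemma compact_allocations: "compact (allocations n :: (nat \<Rightarrow> real^'s::finite) set)"
proof -
  define K :: "nat \<Rightarrow> (real^'s) set" where "K i = (if i < n then cbox 0 (\<chi> s. 1) else {0})" for i
  have "compact (K i)" for i
    by (simp add: K_def)
  then have "compactin (product_topology (\<lambda>i. euclidean) UNIV) (PiE UNIV K)"
    by (simp add: compactin_PiE)
  then have "compact (Pi UNIV K)"
    by (simp add: euclidean_product_topology PiE_UNIV_domain)
  moreover have "closed {x :: nat \<Rightarrow> real^'s. (\<Sum>i<n. x i) = (\<chi> s. 1)}"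
    by (intro closed_Collect_eq continuous_on_sum continuous_on_product_coordinates continuous_on_const)
  moreover have "allocations n = Pi UNIV K \<inter> {x. (\<Sum>i<n. x i) = (\<chi> s. 1)}"
  proof (intro equalityI subsetI)
    fix x :: "nat \<Rightarrow> real^'s" assume x: "x \<in> allocations n"
    have "x i $ s \<le> 1" if "i < n" for i s
      using member_le_sum[of i "{..<n}" "\<lambda>k. x k $ s"] x that
      by (simp add: allocations_sum_component allocations_def)
    with x show "x \<in> Pi UNIV K \<inter> {x. (\<Sum>i<n. x i) = (\<chi> s. 1)}"
      by (auto simp: allocations_def K_def mem_box_cart)
  next
    fix x :: "nat \<Rightarrow> real^'s" assume x: "x \<in> Pi UNIV K \<inter> {x. (\<Sum>i<n. x i) = (\<chi> s. 1)}"
    then have K: "x i \<in> K i" for i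
      by (simp add: Pi_iff)
    have "x i \<in> cbox 0 (\<chi> s. 1)" if "i < n" for i
      using K[of i] that by (simp add: K_def)
    moreover have "x i = 0" if "\<not> i < n" for i
      using K[of i] that by (simp add: K_def)
    ultimately show "x \<in> allocations n"
      using x by (auto simp: allocations_def mem_box_cart)
  qed
  ultimately show ?thesis
    by (simp add: compact_Int_closed)
qed

lemma nash_product_maximiser_exists:
  fixes P :: "nat \<Rightarrow> real^'s::finite"
  assumes n: "n \<ge> 1" and prof: "profile n P"
  shows "\<exists>x\<in>allocations n. 0 < nash_product n P x \<and>
           (\<forall>y\<in>allocations n. nash_product n P y \<le> nash_product n P x)"
proof -
  define x0 :: "nat \<Rightarrow> real^'s" where "x0 i = (if i < n then (1 / real n) *\<^sub>R (\<chi> s. 1) else 0)" for i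
  have "(\<Sum>i<n. x0 i $ s) = (\<Sum>i<n. 1 / real n)" for s
    by (rule sum.cong) (simp_all add: x0_def)
  then have "(\<Sum>i<n. x0 i) = (\<chi> s. 1)"
    using n by (simp add: vec_eq_iff)
  then have "x0 \<in> allocations n"
    using n by (simp add: allocations_def x0_def)
  have "P i \<bullet> x0 i = 1 / real n" if "i < n" for i
    using prof that by (simp add: x0_def inner_vec_real profile_def belief_simplex_def
        flip: sum_divide_distrib)
  then have "0 < nash_product n P x0"
    using n by (simp add: nash_product_def)
  moreover have "continuous_on (allocations n) (nash_product n P)"
    unfolding nash_product_def
    by (intro continuous_on_prod continuous_on_inner continuous_on_const
        continuous_on_subset[OF continuous_on_product_coordinates]) simp
  ultimately obtain x where "x \<in> allocations n" "\<forall>y\<in>allocations n. nash_product n P y \<le> nash_product n P x"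
    using continuous_attains_sup[OF compact_allocations] \<open>x0 \<in> allocations n\<close> by blast
  with \<open>0 < nash_product n P x0\<close> \<open>x0 \<in> allocations n\<close> show ?thesis
    by (meson less_le_trans)
qed

lemma allocations_transfer:
  fixes x :: "nat \<Rightarrow> real^'s::finite"
  assumes x: "x \<in> allocations n" and "i < n" "j < n" "i \<noteq> j" "0 \<le> t" "t \<le> x i $ s"
  shows "x(i := x i - t *\<^sub>R axis s 1, j := x j + t *\<^sub>R axis s 1) \<in> allocations n"
proof -
  define e :: "real^'s" where "e = t *\<^sub>R axis s 1"
  have upd: "(x(i := x i - e, j := x j + e)) k = x k - (if k = i then e else 0) + (if k = j then e else 0)" for k
    using \<open>i \<noteq> j\<close> by auto
  have "(\<Sum>k<n. (x(i := x i - e, j := x j + e)) k) = (\<Sum>k<n. x k)"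
    unfolding upd using \<open>i < n\<close> \<open>j < n\<close> by (simp add: sum.distrib sum_subtractf)
  moreover have "0 \<le> (x(i := x i - e, j := x j + e)) k $ s'" if "k < n" for k s'
    using x that assms(2-6) by (auto simp: allocations_def e_def axis_def)
  ultimately show ?thesis
    using x assms(2,3) by (auto simp: allocations_def e_def)
qed

lemma nash_product_two_agents:
  assumes "i < n" "j < n" "i \<noteq> j"
  shows "nash_product n P x = (P i \<bullet> x i) * (P j \<bullet> x j) * (\<Prod>k\<in>{..<n} - {i, j}. P k \<bullet> x k)"
proof -
  have "{..<n} - {i} - {j} = {..<n} - {i, j}"
    by auto
  then show ?thesis
    using assms by (simp add: nash_product_def prod.remove[of "{..<n}" i] prod.remove[of "{..<n} - {i}" j])
qed

lemma product_perturbation_le_imp_le: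
  fixes a b p q m :: real
  assumes "0 \<le> p * q" "0 < m"
    and le: "\<And>t. 0 < t \<Longrightarrow> t \<le> m \<Longrightarrow> (a - t * p) * (b + t * q) \<le> a * b"
  shows "q * a \<le> p * b"
proof (rule ccontr)
  define d where "d = q * a - p * b"
  assume "\<not> q * a \<le> p * b"
  then have "d > 0"
    by (simp add: d_def)
  \<comment> \<open>The product grows at rate d, up to a second-order term t^2 p q.\<close>
  define t where "t = min m (d / (p * q + 1))"
  have "0 < t" "t \<le> m" "t \<le> d / (p * q + 1)"
    using assms(1,2) \<open>d > 0\<close> by (auto simp: t_def)
  have "(a - t * p) * (b + t * q) = a * b + t * (d - t * (p * q))"
    by (simp add: d_def algebra_simps)
  with le[OF \<open>0 < t\<close> \<open>t \<le> m\<close>] \<open>0 < t\<close> have "d \<le> t * (p * q)"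
    by (simp add: mult_le_0_iff)
  also have "\<dots> \<le> d / (p * q + 1) * (p * q)"
    using \<open>t \<le> d / (p * q + 1)\<close> assms(1) by (rule mult_right_mono)
  also have "\<dots> < d"
    using \<open>d > 0\<close> assms(1) by (simp add: field_simps)
  finally show False
    by simp
qed

lemma nash_product_maximiser_exchange:
  fixes P :: "nat \<Rightarrow> real^'s::finite"
  assumes prof: "profile n P" and x: "x \<in> allocations n"
    and max: "\<forall>y\<in>allocations n. nash_product n P y \<le> nash_product n P x"
    and pos: "\<And>k. k < n \<Longrightarrow> 0 < P k \<bullet> x k"
    and i: "i < n" and j: "j < n" and buys: "0 < x i $ s"
  shows "P j $ s / (P j \<bullet> x j) \<le> P i $ s / (P i \<bullet> x i)"
proof (cases "i = j")
  case False
  define R where "R = (\<Prod>k\<in>{..<n} - {i, j}. P k \<bullet> x k)"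
  have "0 < R"
    unfolding R_def using pos by (intro prod_pos) auto
  have "0 \<le> P i $ s * P j $ s"
    using prof i j by (simp add: profile_def belief_simplex_def)
  then have "P j $ s * (P i \<bullet> x i) \<le> P i $ s * (P j \<bullet> x j)"
  proof (rule product_perturbation_le_imp_le[OF _ buys])
    fix t assume "0 < t" "t \<le> x i $ s"
    define y where "y = x(i := x i - t *\<^sub>R axis s 1, j := x j + t *\<^sub>R axis s 1)"
    have "y \<in> allocations n"
      unfolding y_def using x i j False \<open>0 < t\<close> \<open>t \<le> x i $ s\<close> by (intro allocations_transfer) auto
    have "nash_product n P y = (P i \<bullet> x i - t * P i $ s) * (P j \<bullet> x j + t * P j $ s) * R"
      unfolding nash_product_two_agents[OF i j False] R_def using False
      by (auto simp: y_def inner_diff_right inner_add_right inner_axis intro!: prod.cong)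
    moreover have "nash_product n P x = (P i \<bullet> x i) * (P j \<bullet> x j) * R"
      unfolding nash_product_two_agents[OF i j False] R_def ..
    ultimately show "(P i \<bullet> x i - t * P i $ s) * (P j \<bullet> x j + t * P j $ s) \<le> (P i \<bullet> x i) * (P j \<bullet> x j)"
      using max \<open>y \<in> allocations n\<close> \<open>0 < R\<close> by (metis mult_le_cancel_right_pos)
  qed
  with pos[OF i] pos[OF j] show ?thesis
    by (simp add: divide_simps mult.commute)
qed simp

lemma nash_product_pos_imp_utility_pos:
  fixes P :: "nat \<Rightarrow> real^'s::finite"
  assumes "profile n P" "x \<in> allocations n" "0 < nash_product n P x" "i < n"
  shows "0 < P i \<bullet> x i"
proof -
  have "0 \<le> P i \<bullet> x i"
    using assms by (auto simp: inner_vec_real profile_def belief_simplex_def allocations_def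
        intro!: sum_nonneg)
  moreover have "P i \<bullet> x i \<noteq> 0"
  proof
    assume "P i \<bullet> x i = 0"
    then have "nash_product n P x = 0"
      using assms(4) by (auto simp: nash_product_def prod_zero_iff)
    with assms(3) show False
      by simp
  qed
  ultimately show ?thesis
    by simp
qed

text \<open>When all buyers of a state s share the largest ratio P k s / (P k \<bullet> x k), that ratio is
  n times the equilibrium price of s; averaging it with the weights x k s avoids taking a maximum.\<close>

definition allocation_price :: "nat \<Rightarrow> (nat \<Rightarrow> real^'s::finite) \<Rightarrow> (nat \<Rightarrow> real^'s) \<Rightarrow> real^'s" where
  "allocation_price n P x = (\<chi> s. (\<Sum>k<n. x k $ s * (P k $ s / (P k \<bullet> x k))) / real n)"

lemma allocation_price_scaled:
  assumes "n \<ge> 1"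
  shows "real n * allocation_price n P x $ s = (\<Sum>k<n. x k $ s * (P k $ s / (P k \<bullet> x k)))"
  using assms by (simp add: allocation_price_def)

lemma allocation_price_buyer:
  fixes P :: "nat \<Rightarrow> real^'s::finite"
  assumes x: "x \<in> allocations n"
    and ratio: "\<And>i j s. i < n \<Longrightarrow> j < n \<Longrightarrow> 0 < x i $ s \<Longrightarrow>
                  P j $ s / (P j \<bullet> x j) \<le> P i $ s / (P i \<bullet> x i)"
    and i: "i < n" and buys: "0 < x i $ s"
  shows "real n * allocation_price n P x $ s = P i $ s / (P i \<bullet> x i)"
proof -
  have same: "x k $ s * (P k $ s / (P k \<bullet> x k)) = x k $ s * (P i $ s / (P i \<bullet> x i))" if k: "k < n" for k
  proof (cases "x k $ s = 0")
    case False
    moreover have "0 \<le> x k $ s"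
      using x k by (simp add: allocations_def)
    ultimately have "0 < x k $ s"
      by simp
    then have "P k $ s / (P k \<bullet> x k) = P i $ s / (P i \<bullet> x i)"
      using ratio[OF i k buys] ratio[OF k i] by (meson antisym)
    then show ?thesis
      by simp
  qed simp
  have "real n * allocation_price n P x $ s = (\<Sum>k<n. x k $ s * (P k $ s / (P k \<bullet> x k)))"
    using i by (intro allocation_price_scaled) simp
  also have "\<dots> = (\<Sum>k<n. x k $ s * (P i $ s / (P i \<bullet> x i)))"
    by (rule sum.cong[OF refl]) (rule same, simp)
  also have "\<dots> = P i $ s / (P i \<bullet> x i)"
    by (simp only: allocations_sum_component[OF x] mult_1_left flip: sum_distrib_right)
  finally show ?thesis .
qed

lemma allocation_price_bound:
  fixes P :: "nat \<Rightarrow> real^'s::finite"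
  assumes x: "x \<in> allocations n"
    and ratio: "\<And>i j s. i < n \<Longrightarrow> j < n \<Longrightarrow> 0 < x i $ s \<Longrightarrow>
                  P j $ s / (P j \<bullet> x j) \<le> P i $ s / (P i \<bullet> x i)"
    and j: "j < n"
  shows "P j $ s / (P j \<bullet> x j) \<le> real n * allocation_price n P x $ s"
proof -
  have "0 \<le> x k $ s" if "k < n" for k
    using x that by (simp add: allocations_def)
  then obtain k where "k < n" "0 < x k $ s"
    using allocations_sum_component[OF x, of s]
    by (metis (no_types, lifting) lessThan_iff order_le_less sum.neutral zero_neq_one)
  then show ?thesis
    using allocation_price_buyer[OF x ratio] ratio j by simp
qed

lemma allocation_price_in_simplex:
  fixes P :: "nat \<Rightarrow> real^'s::finite"
  assumes n: "n \<ge> 1" and prof: "profile n P" and x: "x \<in> allocations n"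
    and pos: "\<And>k. k < n \<Longrightarrow> 0 < P k \<bullet> x k"
    and ratio: "\<And>i j s. i < n \<Longrightarrow> j < n \<Longrightarrow> 0 < x i $ s \<Longrightarrow>
                  P j $ s / (P j \<bullet> x j) \<le> P i $ s / (P i \<bullet> x i)"
  shows "allocation_price n P x \<in> belief_simplex"
proof -
  have nonneg: "0 \<le> allocation_price n P x $ s" for s
  proof -
    have "0 \<le> P 0 $ s / (P 0 \<bullet> x 0)"
      using prof n pos[of 0] by (simp add: profile_def belief_simplex_def)
    also have "\<dots> \<le> real n * allocation_price n P x $ s"
      using n by (intro allocation_price_bound[OF x ratio]) auto
    finally show ?thesis
      using n by (simp add: zero_le_mult_iff)
  qed
  have "real n * (\<Sum>s\<in>UNIV. allocation_price n P x $ s) =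
      (\<Sum>s\<in>UNIV. \<Sum>k<n. x k $ s * (P k $ s / (P k \<bullet> x k)))"
    using n by (simp add: sum_distrib_left allocation_price_scaled)
  also have "\<dots> = (\<Sum>k<n. \<Sum>s\<in>UNIV. x k $ s * (P k $ s / (P k \<bullet> x k)))"
    by (rule sum.swap)
  also have "\<dots> = (\<Sum>k<n. 1)"
  proof (rule sum.cong[OF refl])
    fix k assume "k \<in> {..<n}"
    then have "P k \<bullet> x k \<noteq> 0"
      using pos by fastforce
    have "(\<Sum>s\<in>UNIV. x k $ s * (P k $ s / (P k \<bullet> x k))) = (\<Sum>s\<in>UNIV. P k $ s * x k $ s) / (P k \<bullet> x k)"
      by (simp add: sum_divide_distrib mult.commute)
    also have "\<dots> = 1"
      using \<open>P k \<bullet> x k \<noteq> 0\<close> by (simp add: inner_vec_real)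
    finally show "(\<Sum>s\<in>UNIV. x k $ s * (P k $ s / (P k \<bullet> x k))) = 1" .
  qed
  finally have "real n * (\<Sum>s\<in>UNIV. allocation_price n P x $ s) = real n"
    by simp
  with n nonneg show ?thesis
    by (simp add: belief_simplex_def)
qed

lemma pm_equilibrium_allocation_price:
  fixes P :: "nat \<Rightarrow> real^'s::finite"
  assumes n: "n \<ge> 1" and prof: "profile n P" and x: "x \<in> allocations n"
    and pos: "\<And>k. k < n \<Longrightarrow> 0 < P k \<bullet> x k"
    and ratio: "\<And>i j s. i < n \<Longrightarrow> j < n \<Longrightarrow> 0 < x i $ s \<Longrightarrow>
                  P j $ s / (P j \<bullet> x j) \<le> P i $ s / (P i \<bullet> x i)"
  shows "pm_equilibrium n P (allocation_price n P x) x"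
proof (rule pm_equilibriumI)
  show "allocation_price n P x \<in> belief_simplex"
    using assms by (rule allocation_price_in_simplex)
  show "(\<Sum>i<n. x i) = (\<chi> s. 1)"
    using x by (simp add: allocations_def)
  show "0 \<le> x i $ s" if "i < n" for i s
    using x that by (simp add: allocations_def)
  show "0 < P i \<bullet> x i" if "i < n" for i
    using pos that .
  show "P i $ s \<le> real n * (P i \<bullet> x i) * allocation_price n P x $ s" if "i < n" for i s
    using allocation_price_bound[OF x ratio that, of s] pos[OF that] by (simp add: field_simps)
  show "P i $ s = real n * (P i \<bullet> x i) * allocation_price n P x $ s" if "i < n" "0 < x i $ s" for i s
    using allocation_price_buyer[OF x ratio that] pos[OF that(1)] by (simp add: field_simps)
qed

lemma pm_equilibrium_exists:
  fixes P :: "nat \<Rightarrow> real^'s::finite"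
  assumes n: "n \<ge> 1" and prof: "profile n P"
  shows "\<exists>\<rho> x. pm_equilibrium n P \<rho> x"
proof -
  obtain x where x: "x \<in> allocations n" and "0 < nash_product n P x"
    and max: "\<forall>y\<in>allocations n. nash_product n P y \<le> nash_product n P x"
    using nash_product_maximiser_exists[OF n prof] by blast
  have pos: "0 < P k \<bullet> x k" if "k < n" for k
    using prof x \<open>0 < nash_product n P x\<close> that by (rule nash_product_pos_imp_utility_pos)
  have "pm_equilibrium n P (allocation_price n P x) x"
    using n prof x pos nash_product_maximiser_exchange[OF prof x max pos]
    by (rule pm_equilibrium_allocation_price)
  then show ?thesis
    by blast
qed

lemma pm_equilibrium_permute:
  fixes P :: "nat \<Rightarrow> real^'s::finite"
  assumes eq: "pm_equilibrium n P \<rho> x" and \<sigma>: "\<sigma> permutes {..<n}"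
  shows "pm_equilibrium n (P \<circ> \<sigma>) \<rho> (x \<circ> \<sigma>)"
proof -
  have "(\<Sum>i<n. (x \<circ> \<sigma>) i) = (\<Sum>i<n. x i)"
    using sum.permute[OF \<sigma>, of x] by simp
  then show ?thesis
    using eq permutes_in_image[OF \<sigma>] by (simp add: pm_equilibrium_def)
qed

lemma pm_equilibrium_shrink:
  fixes P :: "nat \<Rightarrow> real^'s::finite"
  assumes eq: "pm_equilibrium n P \<rho> x" and lam: "\<forall>i<n. 0 \<le> lam i \<and> lam i \<le> 1"
  shows "pm_equilibrium n (\<lambda>i. (1 - lam i) *\<^sub>R P i + lam i *\<^sub>R \<rho>) \<rho> x"
proof -
  have "((1 - lam i) *\<^sub>R P i + lam i *\<^sub>R \<rho>) \<bullet> y \<le> ((1 - lam i) *\<^sub>R P i + lam i *\<^sub>R \<rho>) \<bullet> x i"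
    if i: "i < n" and y: "\<forall>s. 0 \<le> y $ s" "\<rho> \<bullet> y \<le> 1 / real n" for i y
  proof -
    have "P i \<bullet> y \<le> P i \<bullet> x i"
      using eq i y by (rule pm_equilibrium_optimal)
    then have "(1 - lam i) * (P i \<bullet> y) + lam i * (\<rho> \<bullet> y) \<le> (1 - lam i) * (P i \<bullet> x i) + lam i * (1 / real n)"
      using lam i y by (intro add_mono mult_left_mono) auto
    then show ?thesis
      using pm_equilibrium_budget_binding[OF eq i] by (simp add: inner_add_left)
  qed
  then show ?thesis
    using eq by (simp add: pm_equilibrium_def)
qed

lemma anonymous_pm_price:
  assumes "n \<ge> 1"
  shows "anonymous n (pm_price n :: (nat \<Rightarrow> real^'s::finite) \<Rightarrow> real^'s)"
  unfolding anonymous_def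
proof (intro allI impI, elim conjE)
  fix P :: "nat \<Rightarrow> real^'s" and \<sigma> :: "nat \<Rightarrow> nat"
  assume prof: "profile n P" and \<sigma>: "\<sigma> permutes {..<n}"
  obtain \<rho> x where eq: "pm_equilibrium n P \<rho> x"
    using pm_equilibrium_exists[OF assms prof] by blast
  show "pm_price n (P \<circ> \<sigma>) = pm_price n P"
    using pm_price_eqI[OF profile_permute[OF prof \<sigma>] pm_equilibrium_permute[OF eq \<sigma>]]
      pm_price_eqI[OF prof eq] by simp
qed

lemma recursive_invariance_pm_price:
  assumes "n \<ge> 1"
  shows "recursive_invariance n (pm_price n :: (nat \<Rightarrow> real^'s::finite) \<Rightarrow> real^'s)"
  unfolding recursive_invariance_def
proof (intro allI impI, elim conjE)
  fix P :: "nat \<Rightarrow> real^'s" and lam :: "nat \<Rightarrow> real"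
  assume prof: "profile n P" and lam: "\<forall>i<n. 0 \<le> lam i \<and> lam i \<le> 1"
  obtain \<rho> x where eq: "pm_equilibrium n P \<rho> x"
    using pm_equilibrium_exists[OF assms prof] by blast
  have "\<rho> \<in> belief_simplex"
    using eq by (simp add: pm_equilibrium_def)
  then show "pm_price n (\<lambda>i. (1 - lam i) *\<^sub>R P i + lam i *\<^sub>R pm_price n P) = pm_price n P"
    using pm_price_eqI[OF profile_shrink[OF prof _ lam] pm_equilibrium_shrink[OF eq lam]]
      pm_price_eqI[OF prof eq] by simp
qed

theorem proposition7:
  fixes n :: nat
  shows "(odd n \<longrightarrow>
            (\<forall>P :: nat \<Rightarrow> real^'s::finite. profile n P \<longrightarrow> (\<exists>!q. q \<in> geo_median_set n P)) \<and>
            anonymous n (geo_median n :: (nat \<Rightarrow> real^'s) \<Rightarrow> real^'s) \<and>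
            recursive_invariance n (geo_median n :: (nat \<Rightarrow> real^'s) \<Rightarrow> real^'s))
       \<and> (n \<ge> 1 \<longrightarrow>
            (\<forall>P :: nat \<Rightarrow> real^'s. profile n P \<longrightarrow>
               (\<exists>\<rho> x. pm_equilibrium n P \<rho> x) \<and>
               (\<forall>\<rho> x \<rho>' x'. pm_equilibrium n P \<rho> x \<and> pm_equilibrium n P \<rho>' x' \<longrightarrow> \<rho> = \<rho>')) \<and>
            anonymous n (pm_price n :: (nat \<Rightarrow> real^'s) \<Rightarrow> real^'s) \<and>
            recursive_invariance n (pm_price n :: (nat \<Rightarrow> real^'s) \<Rightarrow> real^'s))"
proof (intro conjI impI)
  assume "odd n"
  then show "\<forall>P :: nat \<Rightarrow> real^'s. profile n P \<longrightarrow> (\<exists>!q. q \<in> geo_median_set n P)"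
    using geo_median_set_nonempty geo_median_set_unique by blast
  show "recursive_invariance n (geo_median n :: (nat \<Rightarrow> real^'s) \<Rightarrow> real^'s)"
    using \<open>odd n\<close> by (rule recursive_invariance_geo_median)
next
  assume "n \<ge> 1"
  then show "\<forall>P :: nat \<Rightarrow> real^'s. profile n P \<longrightarrow>
      (\<exists>\<rho> x. pm_equilibrium n P \<rho> x) \<and>
      (\<forall>\<rho> x \<rho>' x'. pm_equilibrium n P \<rho> x \<and> pm_equilibrium n P \<rho>' x' \<longrightarrow> \<rho> = \<rho>')"
    using pm_equilibrium_exists pm_equilibrium_price_unique by blast
  show "anonymous n (pm_price n :: (nat \<Rightarrow> real^'s) \<Rightarrow> real^'s)"
    using \<open>n \<ge> 1\<close> by (rule anonymous_pm_price)
  show "recursive_invariance n (pm_price n :: (nat \<Rightarrow> real^'s) \<Rightarrow> real^'s)"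
    using \<open>n \<ge> 1\<close> by (rule recursive_invariance_pm_price)
qed (rule anonymous_geo_median)

end
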